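(* Fix $p\in(0,1)$. For each $n$, let $(\xi_{ij})_{i,j\in[n]}$ be i.i.d. Bernoulli$(p)$ random variables and define $$\hat H_n:=\prod_{i=1}^n\frac{\sum_{j=1}^n\xi_{ij}}{np}.$$ Then, as $n\to\infty$, $\hat H_n$ converges weakly to $\exp(X)$ where $X\sim\mathcal N\big(-\tfrac{1-p}{2p},\tfrac{1-p}{p}\big)$.
   Context: $\mathcal N(a,s^2)$ is the normal law with mean $a$ and variance $s^2$. *)

theory Defs
  imports "HOL-Probability.Probability"
begin

definition bernoulli_array :: "nat \<Rightarrow> real \<Rightarrow> (nat \<times> nat \<Rightarrow> bool) pmf" where
  "bernoulli_array n p = Pi_pmf ({..<n} \<times> {..<n}) False (\<lambda>_. bernoulli_pmf p)"

definition H_hat :: "nat \<Rightarrow> real \<Rightarrow> (nat \<times> nat \<Rightarrow> bool) \<Rightarrow> real" where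
  "H_hat n p \<xi> = (\<Prod>i<n. (\<Sum>j<n. of_bool (\<xi> (i, j))) / (real n * p))"

definition H_hat_law :: "real \<Rightarrow> nat \<Rightarrow> real measure" where
  "H_hat_law p n = measure_pmf (map_pmf (H_hat n p) (bernoulli_array n p))"

end

(*
  The row sums S_i = \<Sum>j. \<xi>_ij are independent Bin(n, p), so log H_n = \<Sum>i. ln (S_i / (n p)) is a
  sum of n i.i.d. terms. Expanding ln (1 + y) to second order at y = S_i / (n p) - 1, whose variance is
  (1 - p) / (n p), gives n E[ln (S_i / (n p))] \<rightarrow> -(1 - p) / (2 p), n E[ln\<^sup>2] \<rightarrow> (1 - p) / p and
  n E[|ln|\<^sup>3] \<rightarrow> 0; the rows where the expansion is not valid are exponentially rare by Hoeffding's
  inequality. Hence (E exp (i t ln (S_1 / (n p))))^n converges to the characteristic function of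
  N(-(1 - p) / (2 p), (1 - p) / p), and Levy's continuity theorem yields weak convergence of log H_n.
  Exponentiating, and discarding the event that some row is empty (probability at most n (1 - p)^n),
  gives the theorem.
*)

theory Submission
  imports Defs "HOL-Real_Asymp.Real_Asymp"
begin

lemma expectation_binomial_pmf_Suc:
  assumes p: "p \<in> {0..1}"
  shows "measure_pmf.expectation (binomial_pmf (Suc n) p) (f :: nat \<Rightarrow> real) =
           p * measure_pmf.expectation (binomial_pmf n p) (\<lambda>k. f (Suc k)) +
           (1 - p) * measure_pmf.expectation (binomial_pmf n p) f"
proof -
  have "binomial_pmf (Suc n) p =
          bernoulli_pmf p \<bind> (\<lambda>b. map_pmf (\<lambda>k. (if b then 1 else 0) + k) (binomial_pmf n p))"
    using binomial_pmf_Suc[OF p] by (simp add: map_pmf_def)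
  also have "measure_pmf.expectation \<dots> f =
      (\<Sum>b\<in>UNIV. pmf (bernoulli_pmf p) b *\<^sub>R
         measure_pmf.expectation (map_pmf (\<lambda>k. (if b then 1 else 0) + k) (binomial_pmf n p)) f)"
    by (rule pmf_expectation_bind) (use p in \<open>auto intro!: finite_imageI\<close>)
  finally show ?thesis
    using p by (simp add: UNIV_bool)
qed

lemma expectation_binomial_pmf_centered:
  assumes p: "p \<in> {0..1}"
  shows "measure_pmf.expectation (binomial_pmf n p) (\<lambda>k. real k - real n * p) = 0"
proof (induction n)
  case (Suc n)
  have "measure_pmf.expectation (binomial_pmf (Suc n) p) (\<lambda>k. real k - Suc n * p) =
          measure_pmf.expectation (binomial_pmf n p) (\<lambda>k. real k - real n * p) +
          p * (1 - p) - (1 - p) * p"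
    using p by (simp add: expectation_binomial_pmf_Suc Bochner_Integration.integral_diff
                  measure_pmf.prob_space algebra_simps)
  with Suc show ?case by simp
qed (use p in \<open>simp add: binomial_pmf_0\<close>)

lemma expectation_binomial_pmf_centered_square:
  assumes p: "p \<in> {0..1}"
  shows "measure_pmf.expectation (binomial_pmf n p) (\<lambda>k. (real k - real n * p)\<^sup>2) = real n * p * (1 - p)"
proof (induction n)
  case (Suc n)
  let ?E = "measure_pmf.expectation (binomial_pmf n p)"
  have "measure_pmf.expectation (binomial_pmf (Suc n) p) (\<lambda>k. (real k - Suc n * p)\<^sup>2) =
     p * ?E (\<lambda>k. (real k - n * p)\<^sup>2 + 2 * (1 - p) * (real k - n * p) + (1 - p)\<^sup>2) +
     (1 - p) * ?E (\<lambda>k. (real k - n * p)\<^sup>2 - 2 * p * (real k - n * p) + p\<^sup>2)"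
    by (subst expectation_binomial_pmf_Suc[OF p]) (simp add: algebra_simps power2_eq_square)
  also have "\<dots> = Suc n * p * (1 - p)"
    using p Suc expectation_binomial_pmf_centered[OF p, of n]
    by (simp add: Bochner_Integration.integral_add Bochner_Integration.integral_diff
          measure_pmf.prob_space algebra_simps power2_eq_square)
  finally show ?case .
qed (use p in \<open>simp add: binomial_pmf_0\<close>)

lemma abs_ln_one_plus_x_minus_x_plus_half_square_le:
  fixes y :: real
  assumes "\<bar>y\<bar> \<le> 1/2"
  shows "\<bar>ln (1 + y) - y + y\<^sup>2 / 2\<bar> \<le> \<bar>y\<bar> ^ 3"
proof -
  define \<phi> where "\<phi> t = ln (1 + t) - t + t\<^sup>2 / 2" for t :: real
  have deriv: "(\<phi> has_real_derivative t\<^sup>2 / (1 + t)) (at t)" if "-1/2 \<le> t" for t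
    unfolding \<phi>_def using that
    by (auto intro!: derivative_eq_intros simp: field_simps power2_eq_square)
  have \<phi>_mono: "\<phi> a \<le> \<phi> b" if "-1/2 \<le> a" "a \<le> b" for a b
    by (rule deriv_nonneg_imp_mono[OF deriv]) (use that in auto)
  have cubic_mono: "\<phi> b - b ^ 3 \<le> \<phi> a - a ^ 3" if "-1/2 \<le> a" "a \<le> b" for a b
  proof -
    have "a ^ 3 - \<phi> a \<le> b ^ 3 - \<phi> b"
    proof (rule deriv_nonneg_imp_mono[where g = "\<lambda>t. t ^ 3 - \<phi> t"])
      fix t assume t: "t \<in> {a..b}"
      then have "-1/2 \<le> t" using that by simp
      then show "((\<lambda>t. t ^ 3 - \<phi> t) has_real_derivative 3 * t\<^sup>2 - t\<^sup>2 / (1 + t)) (at t)"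
        by (auto intro!: derivative_eq_intros deriv simp: power2_eq_square)
      have "t\<^sup>2 / (1 + t) \<le> t\<^sup>2 * 3"
      proof -
        have "t\<^sup>2 * 1 \<le> t\<^sup>2 * (3 * (1 + t))"
          using \<open>-1/2 \<le> t\<close> by (intro mult_left_mono) auto
        then show ?thesis
          using \<open>-1/2 \<le> t\<close> by (simp add: divide_le_eq algebra_simps)
      qed
      then show "0 \<le> 3 * t\<^sup>2 - t\<^sup>2 / (1 + t)" by simp
    qed (use that in auto)
    then show ?thesis by simp
  qed
  have "\<phi> 0 = 0" by (simp add: \<phi>_def)
  show ?thesis
  proof (cases "y \<ge> 0")
    case True
    then show ?thesis
      using \<phi>_mono[of 0 y] cubic_mono[of 0 y] \<open>\<phi> 0 = 0\<close> by (simp add: \<phi>_def)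
  next
    case False
    then show ?thesis
      using \<phi>_mono[of y 0] cubic_mono[of y 0] \<open>\<phi> 0 = 0\<close> assms by (simp add: \<phi>_def abs_if)
  qed
qed

lemma ln_one_plus_cubic_bounds:
  fixes y :: real
  assumes y: "\<bar>y\<bar> \<le> 1/2"
  shows "\<bar>(ln (1 + y))\<^sup>2 - y\<^sup>2\<bar> \<le> 6 * \<bar>y\<bar> ^ 3"
    and "\<bar>ln (1 + y)\<bar> ^ 3 \<le> 8 * \<bar>y\<bar> ^ 3"
proof -
  have diff: "\<bar>ln (1 + y) - y\<bar> \<le> 2 * y\<^sup>2"
    by (rule abs_ln_one_plus_x_minus_x_bound[OF y])
  have "y\<^sup>2 \<le> \<bar>y\<bar> / 2"
    using y mult_left_mono[of "\<bar>y\<bar>" "1/2" "\<bar>y\<bar>"] by (simp add: power2_eq_square)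
  with diff have abs_ln: "\<bar>ln (1 + y)\<bar> \<le> 2 * \<bar>y\<bar>" by linarith
  have "\<bar>(ln (1 + y))\<^sup>2 - y\<^sup>2\<bar> = \<bar>ln (1 + y) - y\<bar> * \<bar>ln (1 + y) + y\<bar>"
    by (simp add: power2_eq_square abs_mult[symmetric] algebra_simps)
  also have "\<dots> \<le> (2 * y\<^sup>2) * (3 * \<bar>y\<bar>)"
    using diff abs_ln by (intro mult_mono) auto
  finally show "\<bar>(ln (1 + y))\<^sup>2 - y\<^sup>2\<bar> \<le> 6 * \<bar>y\<bar> ^ 3"
    by (simp add: power2_eq_square power3_eq_cube)
  have "\<bar>ln (1 + y)\<bar> ^ 3 \<le> (2 * \<bar>y\<bar>) ^ 3"
    using abs_ln by (intro power_mono) auto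
  then show "\<bar>ln (1 + y)\<bar> ^ 3 \<le> 8 * \<bar>y\<bar> ^ 3"
    by (simp add: power_mult_distrib)
qed

lemma cubic_bounds_of_abs_le:
  fixes a y A :: real
  assumes "\<bar>a\<bar> \<le> A" "\<bar>y\<bar> \<le> A" "2 \<le> A"
  shows "\<bar>a - y + y\<^sup>2 / 2\<bar> \<le> A ^ 3" "\<bar>a\<^sup>2 - y\<^sup>2\<bar> \<le> A ^ 3" "\<bar>a\<bar> ^ 3 \<le> A ^ 3"
proof -
  have sq: "a\<^sup>2 \<le> A\<^sup>2" "y\<^sup>2 \<le> A\<^sup>2"
    using assms power_mono[of "\<bar>a\<bar>" A 2] power_mono[of "\<bar>y\<bar>" A 2] by simp_all
  have "2 * A\<^sup>2 \<le> A ^ 3" "2 * A \<le> A\<^sup>2"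
    using assms mult_right_mono[of 2 A "A\<^sup>2"] mult_right_mono[of 2 A A]
    by (simp_all add: power2_eq_square power3_eq_cube)
  with assms sq zero_le_power2[of a] zero_le_power2[of y]
  show "\<bar>a - y + y\<^sup>2 / 2\<bar> \<le> A ^ 3" "\<bar>a\<^sup>2 - y\<^sup>2\<bar> \<le> A ^ 3"
    unfolding abs_le_iff by (intro conjI; linarith)+
  show "\<bar>a\<bar> ^ 3 \<le> A ^ 3"
    using assms by (intro power_mono) auto
qed

lemma abs_ln_le_plus_inverse:
  fixes x :: real
  assumes "0 < x"
  shows "\<bar>ln x\<bar> \<le> x + 1 / x"
proof -
  have "ln x \<le> x - 1" "- ln x \<le> 1 / x - 1" "0 < 1 / x"
    using ln_le_minus_one[of x] ln_le_minus_one[of "1 / x"] assms by (simp_all add: ln_div)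
  then show ?thesis
    using assms unfolding abs_le_iff by linarith
qed

(* Compare with exp (w / n) ^ n = exp w: since norm (z n) \<le> 1 forces Re w \<le> 0, also
   norm (exp (w / n)) \<le> 1, and norm_power_diff applies. *)
lemma tendsto_power_of_n_times_diff_one:
  fixes z :: "nat \<Rightarrow> complex"
  assumes bounded: "\<And>n. norm (z n) \<le> 1"
    and lim: "(\<lambda>n. of_nat n * (z n - 1)) \<longlonglongrightarrow> w"
  shows "(\<lambda>n. z n ^ n) \<longlonglongrightarrow> exp w"
proof -
  define e where "e n = exp (w / of_nat n)" for n
  have "Re w \<le> 0"
  proof (rule tendsto_upperbound[OF tendsto_Re[OF lim]])
    show "\<forall>\<^sub>F n in sequentially. Re (of_nat n * (z n - 1)) \<le> 0"
    proof (intro always_eventually allI)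
      fix n
      have "Re (z n) \<le> 1"
        using complex_Re_le_cmod[of "z n"] bounded[of n] by linarith
      then show "Re (of_nat n * (z n - 1)) \<le> 0"
        by (simp add: mult_nonneg_nonpos)
    qed
  qed simp
  then have e_bounded: "norm (e n) \<le> 1" for n
    by (simp add: e_def norm_exp_eq_Re divide_nonpos_nonneg)
  have e_power: "e n ^ n = exp w" if "0 < n" for n
    using that by (simp add: e_def exp_of_nat_mult[symmetric])
  have e_lim: "(\<lambda>n. of_nat n * (e n - 1)) \<longlonglongrightarrow> w"
  proof (cases "w = 0")
    case False
    have "((\<lambda>h. (exp h - exp 0) / (h - 0)) \<longlongrightarrow> exp 0) (at (0 :: complex))"
      using has_field_derivative_iff DERIV_exp by blast
    then have deriv: "((\<lambda>h. (exp h - 1) / h) \<longlongrightarrow> 1) (at (0 :: complex))"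
      by simp
    have "filterlim (\<lambda>n. w / of_nat n) (at 0) sequentially"
    proof (rule filterlim_atI)
      show "(\<lambda>n. w / of_nat n) \<longlonglongrightarrow> 0"
        using tendsto_mult[OF tendsto_const[of w] lim_1_over_n] by simp
      show "\<forall>\<^sub>F n in sequentially. w / of_nat n \<noteq> 0"
        using eventually_gt_at_top[of 0] by eventually_elim (use False in simp)
    qed
    from filterlim_compose[OF deriv this]
    have "(\<lambda>n. w * ((e n - 1) / (w / of_nat n))) \<longlonglongrightarrow> w * 1"
      unfolding e_def by (intro tendsto_mult tendsto_const) (simp add: o_def)
    moreover have "\<forall>\<^sub>F n in sequentially. w * ((e n - 1) / (w / of_nat n)) = of_nat n * (e n - 1)"
      using eventually_gt_at_top[of 0] by eventually_elim (use False in \<open>simp add: field_simps\<close>)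
    ultimately show ?thesis
      by (simp add: Lim_transform_eventually)
  qed (simp add: e_def)
  have "(\<lambda>n. z n ^ n - exp w) \<longlonglongrightarrow> 0"
  proof (rule Lim_null_comparison)
    show "\<forall>\<^sub>F n in sequentially. norm (z n ^ n - exp w) \<le>
        norm (of_nat n * (z n - 1) - w) + norm (w - of_nat n * (e n - 1))"
      using eventually_gt_at_top[of 0]
    proof eventually_elim
      case (elim n)
      have "norm (z n ^ n - exp w) = norm (z n ^ n - e n ^ n)"
        using elim by (simp add: e_power)
      also have "\<dots> \<le> n * norm (z n - e n)"
        by (rule norm_power_diff[OF bounded e_bounded])
      also have "\<dots> = norm (of_nat n * (z n - e n))"
        by (simp add: norm_mult)
      also have "\<dots> = norm ((of_nat n * (z n - 1) - w) + (w - of_nat n * (e n - 1)))"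
        by (simp add: algebra_simps)
      also have "\<dots> \<le> norm (of_nat n * (z n - 1) - w) + norm (w - of_nat n * (e n - 1))"
        by (rule norm_triangle_ineq)
      finally show ?case .
    qed
    show "(\<lambda>n. norm (of_nat n * (z n - 1) - w) + norm (w - of_nat n * (e n - 1))) \<longlonglongrightarrow> 0"
      using tendsto_add[OF tendsto_norm_zero[OF LIM_zero[OF lim]]
          tendsto_norm_zero[OF LIM_zero[OF e_lim]]]
      by (simp add: norm_minus_commute)
  qed
  then show ?thesis
    by (simp add: LIM_zero_iff)
qed

lemma char_normal_density:
  assumes \<sigma>: "0 < \<sigma>"
  shows "char (density lborel (normal_density \<mu> \<sigma>)) t =
           exp (\<i> * complex_of_real (t * \<mu>) - complex_of_real ((\<sigma> * t)\<^sup>2 / 2))"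
proof -
  interpret std: real_distribution std_normal_distribution
    by (rule real_dist_normal_dist)
  have "distributed std_normal_distribution lborel (\<lambda>x. x) std_normal_density"
    unfolding distributed_def by (simp add: distr_id2)
  from std.normal_density_affine[OF this zero_less_one, of \<sigma> \<mu>] \<sigma>
  have "density lborel (normal_density \<mu> \<sigma>) = distr std_normal_distribution lborel (\<lambda>x. \<mu> + \<sigma> * x)"
    by (simp add: distributed_def)
  then have "char (density lborel (normal_density \<mu> \<sigma>)) t =
      std.expectation (\<lambda>x. iexp (t * (\<mu> + \<sigma> * x)))"
    by (simp add: char_def integral_distr)
  also have "\<dots> = std.expectation (\<lambda>x. iexp (t * \<mu>) * iexp (t * \<sigma> * x))"
    by (simp add: exp_add[symmetric] algebra_simps)
  also have "\<dots> = iexp (t * \<mu>) * char std_normal_distribution (t * \<sigma>)"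
    unfolding char_def by simp
  also have "\<dots> = iexp (t * \<mu>) * exp (- complex_of_real ((\<sigma> * t)\<^sup>2 / 2))"
    by (simp add: char_std_normal_distribution exp_of_real[symmetric] mult.commute)
  also have "\<dots> = exp (\<i> * complex_of_real (t * \<mu>) - complex_of_real ((\<sigma> * t)\<^sup>2 / 2))"
    by (simp add: exp_add[symmetric])
  finally show ?thesis .
qed

lemma iexp_second_order_approx:
  "cmod (iexp x - (1 + \<i> * complex_of_real x - complex_of_real (x\<^sup>2 / 2))) \<le> \<bar>x\<bar> ^ 3 / 6"
proof -
  have "(\<Sum>k\<le>2. (\<i> * complex_of_real x) ^ k / fact k) =
      1 + \<i> * complex_of_real x - complex_of_real (x\<^sup>2 / 2)"
    by (simp add: numeral_2_eq_2 power2_eq_square complex_eq_iff)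
  moreover have "fact (Suc 2) = (6 :: real)"
    by (simp add: numeral_3_eq_3)
  ultimately show ?thesis
    using iexp_approx1[of x 2] by (simp add: numeral_3_eq_3)
qed

lemma expectation_iexp_second_order_approx:
  fixes M :: "'a pmf" and X :: "'a \<Rightarrow> real"
  assumes "finite (set_pmf M)"
  shows "cmod (measure_pmf.expectation M (\<lambda>\<omega>. iexp (t * X \<omega>)) -
           (1 + \<i> * complex_of_real (t * measure_pmf.expectation M X) -
            complex_of_real (t\<^sup>2 * measure_pmf.expectation M (\<lambda>\<omega>. (X \<omega>)\<^sup>2) / 2)))
         \<le> \<bar>t\<bar> ^ 3 / 6 * measure_pmf.expectation M (\<lambda>\<omega>. \<bar>X \<omega>\<bar> ^ 3)"
proof -
  let ?E = "measure_pmf.expectation M"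
  define a where "a \<omega> = 1 + \<i> * complex_of_real (t * X \<omega>) - complex_of_real ((t * X \<omega>)\<^sup>2 / 2)"
    for \<omega>
  have integrable: "integrable M f" for f :: "'a \<Rightarrow> 'b :: {banach, second_countable_topology}"
    using assms by (rule integrable_measure_pmf_finite)
  have "?E a = 1 + \<i> * complex_of_real (?E (\<lambda>\<omega>. t * X \<omega>)) -
      complex_of_real (?E (\<lambda>\<omega>. (t * X \<omega>)\<^sup>2 / 2))"
    unfolding a_def
    by (simp only: integrable Bochner_Integration.integral_add Bochner_Integration.integral_diff
        integral_mult_right_zero integral_complex_of_real)
      (simp add: measure_pmf.prob_space)
  also have "\<dots> = 1 + \<i> * complex_of_real (t * ?E X) -
      complex_of_real (t\<^sup>2 * ?E (\<lambda>\<omega>. (X \<omega>)\<^sup>2) / 2)"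
    by (simp add: power_mult_distrib)
  finally have "?E a = 1 + \<i> * complex_of_real (t * ?E X) -
      complex_of_real (t\<^sup>2 * ?E (\<lambda>\<omega>. (X \<omega>)\<^sup>2) / 2)" .
  then have "cmod (?E (\<lambda>\<omega>. iexp (t * X \<omega>)) - (1 + \<i> * complex_of_real (t * ?E X) -
        complex_of_real (t\<^sup>2 * ?E (\<lambda>\<omega>. (X \<omega>)\<^sup>2) / 2))) =
      cmod (?E (\<lambda>\<omega>. iexp (t * X \<omega>) - a \<omega>))"
    by (simp add: integrable Bochner_Integration.integral_diff)
  also have "\<dots> \<le> ?E (\<lambda>\<omega>. cmod (iexp (t * X \<omega>) - a \<omega>))"
    by (rule integral_norm_bound)
  also have "\<dots> \<le> ?E (\<lambda>\<omega>. \<bar>t\<bar> ^ 3 / 6 * \<bar>X \<omega>\<bar> ^ 3)"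
  proof (intro integral_mono integrable)
    fix \<omega>
    show "cmod (iexp (t * X \<omega>) - a \<omega>) \<le> \<bar>t\<bar> ^ 3 / 6 * \<bar>X \<omega>\<bar> ^ 3"
      using iexp_second_order_approx[of "t * X \<omega>"]
      by (simp add: a_def abs_mult power_mult_distrib)
  qed
  finally show ?thesis
    by simp
qed

lemma weak_conv_m_distr_continuous:
  fixes \<mu> :: "nat \<Rightarrow> real measure" and h :: "real \<Rightarrow> real"
  assumes \<mu>: "\<And>n. real_distribution (\<mu> n)" and M: "real_distribution M"
    and conv: "weak_conv_m \<mu> M" and h: "\<And>x. isCont h x"
  shows "weak_conv_m (\<lambda>n. distr (\<mu> n) borel h) (distr M borel h)"
proof -
  have h_measurable [measurable]: "h \<in> borel_measurable borel"
    using h by (intro borel_measurable_continuous_onI continuous_at_imp_continuous_on) auto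
  have distr: "real_distribution (distr N borel h)" if "real_distribution N" for N
  proof -
    interpret real_distribution N by fact
    show ?thesis by (rule real_distribution_distr) simp
  qed
  show ?thesis
  proof (rule integral_bdd_continuous_conv_imp_weak_conv[OF distr[OF \<mu>] distr[OF M]])
    fix f :: "real \<Rightarrow> real"
    assume f: "\<And>x. isCont f x" "\<And>x. \<bar>f x\<bar> \<le> 1"
    have f_measurable [measurable]: "f \<in> borel_measurable borel"
      using f(1) by (intro borel_measurable_continuous_onI continuous_at_imp_continuous_on) auto
    have "(\<lambda>n. integral\<^sup>L (\<mu> n) (\<lambda>x. f (h x))) \<longlonglongrightarrow> integral\<^sup>L M (\<lambda>x. f (h x))"
      using f by (intro weak_conv_imp_integral_bdd_continuous_conv[OF \<mu> M conv, where B = 1]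
          continuous_at_compose[OF h, unfolded comp_def]) auto
    moreover have "integral\<^sup>L (distr N borel h) f = integral\<^sup>L N (\<lambda>x. f (h x))"
      if "real_distribution N" for N
    proof -
      interpret real_distribution N by fact
      show ?thesis by (rule integral_distr) simp_all
    qed
    ultimately show "(\<lambda>n. integral\<^sup>L (distr (\<mu> n) borel h) f) \<longlonglongrightarrow> integral\<^sup>L (distr M borel h) f"
      using \<mu> M by simp
  qed
qed

lemma real_distribution_normal_density:
  "0 < \<sigma> \<Longrightarrow> real_distribution (density lborel (normal_density \<mu> \<sigma>))"
  unfolding real_distribution_def real_distribution_axioms_def
  by (simp add: prob_space_normal_density)

lemma real_distribution_distr_measure_pmf: "real_distribution (distr (measure_pmf M) borel X)"
  by (intro prob_space.real_distribution_distr prob_space_measure_pmf) simp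

lemma cdf_map_pmf: "cdf (measure_pmf (map_pmf X M)) x = measure_pmf.prob M {\<omega>. X \<omega> \<le> x}"
  by (simp add: cdf_def vimage_def)

lemma cdf_distr_measure_pmf:
  "cdf (distr (measure_pmf M) borel X) x = measure_pmf.prob M {\<omega>. X \<omega> \<le> x}"
  by (simp add: cdf_def measure_distr vimage_def)

lemma weak_conv_m_map_pmf_iff_distr:
  "weak_conv_m (\<lambda>n. measure_pmf (map_pmf (X n) (M n))) \<nu> \<longleftrightarrow>
     weak_conv_m (\<lambda>n. distr (measure_pmf (M n)) borel (X n)) \<nu>"
  by (simp add: weak_conv_m_def weak_conv_def cdf_map_pmf cdf_distr_measure_pmf)

lemma weak_conv_m_map_pmf_of_prob_neq_tendsto_zero:
  fixes M :: "nat \<Rightarrow> 'a pmf" and X Y :: "nat \<Rightarrow> 'a \<Rightarrow> real"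
  assumes conv: "weak_conv_m (\<lambda>n. measure_pmf (map_pmf (X n) (M n))) \<nu>"
    and neq: "(\<lambda>n. measure_pmf.prob (M n) {\<omega>. X n \<omega> \<noteq> Y n \<omega>}) \<longlonglongrightarrow> 0"
  shows "weak_conv_m (\<lambda>n. measure_pmf (map_pmf (Y n) (M n))) \<nu>"
  unfolding weak_conv_m_def weak_conv_def
proof (intro allI impI)
  fix x
  assume "isCont (cdf \<nu>) x"
  let ?P = "\<lambda>n. measure_pmf.prob (M n)"
  have "(\<lambda>n. ?P n {\<omega>. X n \<omega> \<le> x}) \<longlonglongrightarrow> cdf \<nu> x"
    using conv \<open>isCont (cdf \<nu>) x\<close> by (simp add: weak_conv_m_def weak_conv_def cdf_map_pmf)
  moreover have "(\<lambda>n. ?P n {\<omega>. Y n \<omega> \<le> x} - ?P n {\<omega>. X n \<omega> \<le> x}) \<longlonglongrightarrow> 0"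
  proof (rule Lim_null_comparison[OF always_eventually neq], intro allI)
    fix n
    have le: "?P n A \<le> ?P n B + ?P n {\<omega>. X n \<omega> \<noteq> Y n \<omega>}"
      if "A \<subseteq> B \<union> {\<omega>. X n \<omega> \<noteq> Y n \<omega>}" for A B
    proof -
      have "?P n A \<le> ?P n (B \<union> {\<omega>. X n \<omega> \<noteq> Y n \<omega>})"
        using that by (intro measure_pmf.finite_measure_mono) simp_all
      also have "\<dots> \<le> ?P n B + ?P n {\<omega>. X n \<omega> \<noteq> Y n \<omega>}"
        by (rule measure_Un_le) simp_all
      finally show ?thesis .
    qed
    have "{\<omega>. Y n \<omega> \<le> x} \<subseteq> {\<omega>. X n \<omega> \<le> x} \<union> {\<omega>. X n \<omega> \<noteq> Y n \<omega>}"
      and "{\<omega>. X n \<omega> \<le> x} \<subseteq> {\<omega>. Y n \<omega> \<le> x} \<union> {\<omega>. X n \<omega> \<noteq> Y n \<omega>}"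
      by auto
    from this[THEN le]
    show "norm (?P n {\<omega>. Y n \<omega> \<le> x} - ?P n {\<omega>. X n \<omega> \<le> x}) \<le> ?P n {\<omega>. X n \<omega> \<noteq> Y n \<omega>}"
      by simp
  qed
  ultimately show "(\<lambda>n. cdf (measure_pmf (map_pmf (Y n) (M n))) x) \<longlonglongrightarrow> cdf \<nu> x"
    unfolding cdf_map_pmf by (auto dest: tendsto_add)
qed

lemma map_pmf_row_count_bernoulli_array:
  assumes i: "i < n" and p: "p \<in> {0..1}"
  shows "map_pmf (\<lambda>\<xi>. card ({..<n} \<inter> {j. \<xi> (i,j)})) (bernoulli_array n p) = binomial_pmf n p"
proof -
  let ?I = "{..<n} \<times> {..<n}" and ?A = "{i} \<times> {..<n}"
  have cardA: "card ?A = n" by (simp add: card_cartesian_product)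
  have sub: "?A \<subseteq> ?I" using i by auto
  have "binomial_pmf n p = map_pmf (\<lambda>f. card {x\<in>?A. f x}) (Pi_pmf ?A False (\<lambda>_. bernoulli_pmf p))"
    by (rule binomial_pmf_altdef'[OF _ cardA p]) simp
  also have "Pi_pmf ?A False (\<lambda>_. bernoulli_pmf p) =
     map_pmf (\<lambda>f x. if x \<in> ?A then f x else False) (Pi_pmf ?I False (\<lambda>_. bernoulli_pmf p))"
    by (rule Pi_pmf_subset[OF _ sub]) simp
  also have "map_pmf (\<lambda>f. card {x\<in>?A. f x}) \<dots> =
      map_pmf (\<lambda>\<xi>. card ({..<n} \<inter> {j. \<xi> (i,j)})) (Pi_pmf ?I False (\<lambda>_. bernoulli_pmf p))"
    unfolding map_pmf_comp
  proof (intro map_pmf_cong refl)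
    fix f :: "nat \<times> nat \<Rightarrow> bool"
    have "{x\<in>?A. if x \<in> ?A then f x else False} = (\<lambda>j. (i,j)) ` ({..<n} \<inter> {j. f (i,j)})"
      by auto
    moreover have "inj_on (\<lambda>j. (i,j)) ({..<n} \<inter> {j. f (i,j)})" by (auto simp: inj_on_def)
    ultimately show "card {x\<in>?A. if x \<in> ?A then f x else False} = card ({..<n} \<inter> {j. f (i,j)})"
      by (simp add: card_image)
  qed
  finally show ?thesis unfolding bernoulli_array_def ..
qed

lemma indep_vars_bernoulli_array_rows:
  fixes h :: "real \<Rightarrow> real"
  assumes h [measurable]: "h \<in> borel_measurable borel"
  shows "prob_space.indep_vars (measure_pmf (bernoulli_array n p)) (\<lambda>_. borel)
           (\<lambda>i \<xi>. h (\<Sum>j<n. of_bool (\<xi> (i, j)))) {..<n}"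
proof -
  let ?M = "measure_pmf (bernoulli_array n p)"
  let ?K = "\<lambda>i. {i} \<times> {..<n}"
  let ?row_space = "\<lambda>i. PiM (?K i) (\<lambda>_. count_space UNIV)"
  have entries: "prob_space.indep_vars ?M (\<lambda>_. count_space UNIV) (\<lambda>x f. f x) ({..<n} \<times> {..<n})"
    unfolding bernoulli_array_def by (rule indep_vars_Pi_pmf) simp
  have rows: "prob_space.indep_vars ?M ?row_space (\<lambda>i \<xi>. restrict \<xi> (?K i)) {..<n}"
    by (rule prob_space.indep_vars_restrict[OF prob_space_measure_pmf entries])
      (auto simp: disjoint_family_on_def)
  define Y where "Y i \<xi> = h (\<Sum>j<n. of_bool (\<xi> (i, j)))" for i and \<xi> :: "nat \<times> nat \<Rightarrow> bool"
  have "Y i \<in> borel_measurable (?row_space i)" for i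
  proof -
    have "(\<lambda>\<xi>. \<xi> (i, j)) \<in> measurable (?row_space i) (count_space UNIV)" if "j < n" for j
      by (rule measurable_component_singleton) (use that in simp)
    then have "(\<lambda>\<xi>. \<Sum>j<n. of_bool (\<xi> (i, j)) :: real) \<in> borel_measurable (?row_space i)"
      by (intro borel_measurable_sum) (auto intro: measurable_compose)
    then show ?thesis
      unfolding Y_def by (rule measurable_compose) (rule h)
  qed
  then have "prob_space.indep_vars ?M (\<lambda>_. borel) (\<lambda>i \<xi>. Y i (restrict \<xi> (?K i))) {..<n}"
    by (rule prob_space.indep_vars_compose2[OF prob_space_measure_pmf rows])
  moreover have "(\<lambda>i \<xi>. Y i (restrict \<xi> (?K i))) = (\<lambda>i \<xi>. h (\<Sum>j<n. of_bool (\<xi> (i, j))))"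
    unfolding Y_def by (intro ext arg_cong[where f = h] sum.cong) auto
  ultimately show ?thesis
    by simp
qed

(* With the convention ln 0 = 0, exp (log_H_hat n p \<xi>) = H_hat n p \<xi> unless some row of \<xi> is empty. *)
definition log_H_hat :: "nat \<Rightarrow> real \<Rightarrow> (nat \<times> nat \<Rightarrow> bool) \<Rightarrow> real" where
  "log_H_hat n p \<xi> = (\<Sum>i<n. ln ((\<Sum>j<n. of_bool (\<xi> (i, j))) / (real n * p)))"

lemma exp_log_H_hat:
  assumes "0 < p" and rows: "\<forall>i<n. \<exists>j<n. \<xi> (i, j)"
  shows "exp (log_H_hat n p \<xi>) = H_hat n p \<xi>"
proof -
  have "0 < (\<Sum>j<n. of_bool (\<xi> (i, j)) :: real) / (real n * p)" if "i < n" for i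
  proof -
    obtain j where "j < n" "\<xi> (i, j)"
      using rows \<open>i < n\<close> by blast
    then have "0 < card ({..<n} \<inter> {j. \<xi> (i, j)})"
      by (auto simp: card_gt_0_iff)
    moreover have "0 < real n * p"
      using \<open>j < n\<close> assms(1) by simp
    ultimately show ?thesis
      by simp
  qed
  then show ?thesis
    unfolding log_H_hat_def H_hat_def by (simp add: exp_sum)
qed

lemma char_distr_log_H_hat:
  assumes "p \<in> {0..1}"
  shows "char (distr (bernoulli_array n p) borel (log_H_hat n p)) t =
           measure_pmf.expectation (binomial_pmf n p) (\<lambda>k. iexp (t * ln (real k / (real n * p)))) ^ n"
proof -
  let ?M = "measure_pmf (bernoulli_array n p)"
  let ?X = "\<lambda>i \<xi>. ln ((\<Sum>j<n. of_bool (\<xi> (i, j))) / (real n * p))"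
  have indep: "prob_space.indep_vars ?M (\<lambda>_. borel) ?X {..<n}"
    by (rule indep_vars_bernoulli_array_rows) simp
  have "char (distr ?M borel (log_H_hat n p)) t = (\<Prod>i<n. char (distr ?M borel (?X i)) t)"
    unfolding log_H_hat_def by (rule prob_space.char_distr_sum[OF prob_space_measure_pmf indep])
  also have "\<dots> = (\<Prod>i<n. measure_pmf.expectation (binomial_pmf n p) (\<lambda>k. iexp (t * ln (real k / (real n * p)))))"
  proof (intro prod.cong refl)
    fix i
    assume "i \<in> {..<n}"
    have "char (distr ?M borel (?X i)) t =
        measure_pmf.expectation (map_pmf (\<lambda>\<xi>. card ({..<n} \<inter> {j. \<xi> (i, j)})) (bernoulli_array n p))
          (\<lambda>k. iexp (t * ln (real k / (real n * p))))"
      unfolding char_def by (simp add: integral_distr)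
    also have "\<dots> = measure_pmf.expectation (binomial_pmf n p) (\<lambda>k. iexp (t * ln (real k / (real n * p))))"
      using \<open>i \<in> {..<n}\<close> assms by (simp add: map_pmf_row_count_bernoulli_array)
    finally show "char (distr ?M borel (?X i)) t =
        measure_pmf.expectation (binomial_pmf n p) (\<lambda>k. iexp (t * ln (real k / (real n * p))))" .
  qed
  finally show ?thesis
    by simp
qed

lemma prob_bernoulli_array_empty_row_le:
  assumes "p \<in> {0..1}"
  shows "measure_pmf.prob (bernoulli_array n p) {\<xi>. \<exists>i<n. \<forall>j<n. \<not> \<xi> (i, j)} \<le> n * (1 - p) ^ n"
proof -
  let ?M = "bernoulli_array n p"
  let ?A = "\<lambda>i. {\<xi>. card ({..<n} \<inter> {j. \<xi> (i, j)}) = 0}"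
  have "{\<xi>. \<exists>i<n. \<forall>j<n. \<not> \<xi> (i, j)} = (\<Union>i<n. ?A i)"
    by auto
  then have "measure_pmf.prob ?M {\<xi>. \<exists>i<n. \<forall>j<n. \<not> \<xi> (i, j)} \<le> (\<Sum>i<n. measure_pmf.prob ?M (?A i))"
    by (simp add: measure_pmf.finite_measure_subadditive_finite)
  also have "\<dots> = (\<Sum>i<n. pmf (binomial_pmf n p) 0)"
  proof (intro sum.cong refl)
    fix i
    assume "i \<in> {..<n}"
    then have "measure_pmf.prob ?M (?A i) =
        measure_pmf.prob (map_pmf (\<lambda>\<xi>. card ({..<n} \<inter> {j. \<xi> (i, j)})) ?M) {0}"
      by (simp add: vimage_def)
    also have "\<dots> = pmf (binomial_pmf n p) 0"
      using \<open>i \<in> {..<n}\<close> assms by (simp add: map_pmf_row_count_bernoulli_array measure_pmf_single)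
    finally show "measure_pmf.prob ?M (?A i) = pmf (binomial_pmf n p) 0" .
  qed
  also have "\<dots> = n * (1 - p) ^ n"
    using assms by simp
  finally show ?thesis .
qed

lemma prob_exp_log_H_hat_neq_le:
  assumes "0 < p" "p \<le> 1"
  shows "measure_pmf.prob (bernoulli_array n p) {\<xi>. exp (log_H_hat n p \<xi>) \<noteq> H_hat n p \<xi>} \<le>
           n * (1 - p) ^ n"
proof -
  have "{\<xi>. exp (log_H_hat n p \<xi>) \<noteq> H_hat n p \<xi>} \<subseteq> {\<xi>. \<exists>i<n. \<forall>j<n. \<not> \<xi> (i, j)}"
  proof (intro subsetI CollectI)
    fix \<xi>
    assume "\<xi> \<in> {\<xi>. exp (log_H_hat n p \<xi>) \<noteq> H_hat n p \<xi>}"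
    then show "\<exists>i<n. \<forall>j<n. \<not> \<xi> (i, j)"
      using exp_log_H_hat[OF assms(1), of n \<xi>] by (auto simp only: mem_Collect_eq not_all)
  qed
  then have "measure_pmf.prob (bernoulli_array n p) {\<xi>. exp (log_H_hat n p \<xi>) \<noteq> H_hat n p \<xi>} \<le>
      measure_pmf.prob (bernoulli_array n p) {\<xi>. \<exists>i<n. \<forall>j<n. \<not> \<xi> (i, j)}"
    by (rule measure_pmf.finite_measure_mono) simp
  also have "\<dots> \<le> n * (1 - p) ^ n"
    using assms by (intro prob_bernoulli_array_empty_row_le) simp
  finally show ?thesis .
qed

context
  fixes p :: real
  assumes p_pos: "0 < p" and p_less_1: "p < 1"
begin

private lemma p_in_unit_interval [simp]: "p \<in> {0..1}" "0 \<le> p" "p \<le> 1"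
  using p_pos p_less_1 by simp_all

lemma expectation_binomial_relative_deviation:
  assumes "0 < n"
  shows "measure_pmf.expectation (binomial_pmf n p) (\<lambda>k. real k / (real n * p) - 1) = 0"
    and "measure_pmf.expectation (binomial_pmf n p) (\<lambda>k. (real k / (real n * p) - 1)\<^sup>2) =
           (1 - p) / (n * p)"
proof -
  have dev: "real k / (real n * p) - 1 = (real k - n * p) / (n * p)" for k
    using assms p_pos by (simp add: field_simps)
  show "measure_pmf.expectation (binomial_pmf n p) (\<lambda>k. real k / (real n * p) - 1) = 0"
    unfolding dev integral_divide_zero expectation_binomial_pmf_centered[OF p_in_unit_interval(1)]
    by simp
  show "measure_pmf.expectation (binomial_pmf n p) (\<lambda>k. (real k / (real n * p) - 1)\<^sup>2) =
          (1 - p) / (n * p)"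
    unfolding dev power_divide integral_divide_zero
      expectation_binomial_pmf_centered_square[OF p_in_unit_interval(1)]
    using assms p_pos by (simp add: power2_eq_square)
qed

lemma ln_ratio_crude_bounds:
  fixes k n :: nat
  assumes "k \<le> n" "0 < n"
  shows "\<bar>ln (real k / (real n * p))\<bar> \<le> 2 * real n / p"
    and "\<bar>real k / (real n * p) - 1\<bar> \<le> 2 * real n / p"
proof -
  have "1 \<le> real n" "real k \<le> real n"
    using assms by simp_all
  moreover have "real n \<le> real n * real n"
    using \<open>1 \<le> real n\<close> by simp
  ultimately have "real k \<le> real n * real n" "p \<le> real n"
    using p_less_1 by linarith+
  then have "1 \<le> n / p" and ratio_le: "real k / (real n * p) \<le> n / p"
    using p_pos by (simp_all add: field_simps)
  moreover have "0 \<le> real k / (real n * p)"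
    using p_pos by simp
  moreover have two: "2 * real n / p = 2 * (n / p)"
    by simp
  ultimately show "\<bar>real k / (real n * p) - 1\<bar> \<le> 2 * real n / p"
    unfolding abs_le_iff by linarith
  show "\<bar>ln (real k / (real n * p))\<bar> \<le> 2 * real n / p"
  proof (cases "k = 0")
    case False
    then have "1 \<le> real k" by simp
    have "1 / (real k / (real n * p)) = n * p / real k"
      by simp
    also have "\<dots> \<le> n * p / 1"
      using \<open>1 \<le> real k\<close> p_pos by (intro divide_left_mono) auto
    also have "\<dots> \<le> n"
      using p_less_1 mult_left_mono[of p 1 "real n"] by simp
    also have "\<dots> \<le> n / p"
      using p_pos p_less_1 mult_left_mono[of p 1 "real n"] by (simp add: le_divide_eq)
    finally have "1 / (real k / (real n * p)) \<le> n / p" .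
    with abs_ln_le_plus_inverse[of "real k / (real n * p)"] ratio_le two False assms p_pos
    show ?thesis by simp
  qed (use p_pos in simp)
qed

lemma eventually_powr_quarter_le_half: "\<forall>\<^sub>F n in sequentially. real n powr (-1/4) \<le> 1/2"
  by real_asymp

(* Near the mean, |F| \<le> c |y|\<^sup>3 \<le> c \<delta> y\<^sup>2 and E[y\<^sup>2] = (1 - p) / (n p); far from it, Hoeffding's
   inequality bounds the probability. With \<delta> = n powr (-1/4) both parts are o(1 / n). *)
lemma abs_expectation_le_of_near_far_bounds:
  fixes F :: "nat \<Rightarrow> real" and \<delta> c B :: real
  assumes n: "0 < n" and \<delta>: "0 < \<delta>" and c: "0 \<le> c"
    and near: "\<And>k. \<bar>real k / (real n * p) - 1\<bar> < \<delta> \<Longrightarrow>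
                 \<bar>F k\<bar> \<le> c * \<bar>real k / (real n * p) - 1\<bar> ^ 3"
    and far: "\<And>k. k \<le> n \<Longrightarrow> \<bar>F k\<bar> \<le> B"
  shows "\<bar>measure_pmf.expectation (binomial_pmf n p) F\<bar> \<le>
           c * \<delta> * ((1 - p) / (n * p)) + B * (2 * exp (-2 * real n * (p * \<delta>)\<^sup>2))"
proof -
  let ?E = "measure_pmf.expectation (binomial_pmf n p)"
  define y where "y k = real k / (real n * p) - 1" for k
  define far_set where "far_set = {k. \<delta> \<le> \<bar>y k\<bar>}"
  have "0 \<le> B"
    using far[of 0] by simp
  have pointwise: "\<bar>F k\<bar> \<le> c * \<delta> * (y k)\<^sup>2 + B * indicator far_set k"
    if "k \<in> set_pmf (binomial_pmf n p)" for k
  proof (cases "k \<in> far_set")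
    case True
    moreover have "0 \<le> c * \<delta> * (y k)\<^sup>2"
      using c \<delta> by simp
    ultimately show ?thesis
      using far[of k] that p_pos p_less_1 by simp
  next
    case False
    then have "\<bar>F k\<bar> \<le> c * \<bar>y k\<bar> ^ 3"
      using near[of k] unfolding far_set_def y_def by simp
    also have "\<dots> = c * (\<bar>y k\<bar> * (y k)\<^sup>2)"
      by (simp add: power3_eq_cube power2_eq_square)
    also have "\<dots> \<le> c * (\<delta> * (y k)\<^sup>2)"
      using False c unfolding far_set_def by (intro mult_left_mono mult_right_mono) auto
    finally show ?thesis
      using False by simp
  qed
  have far_prob: "measure_pmf.prob (binomial_pmf n p) far_set \<le> 2 * exp (-2 * real n * (p * \<delta>)\<^sup>2)"
  proof -
    interpret binomial_distribution n p
      by unfold_locales simp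
    have "far_set = {k. p * \<delta> \<le> \<bar>real k / n - p\<bar>}"
      using n p_pos by (auto simp: far_set_def y_def abs_mult field_simps simp flip: abs_divide[of _ p])
    then show ?thesis
      using prob_abs_ge'[of "p * \<delta>"] n \<delta> p_pos by simp
  qed
  have "\<bar>?E F\<bar> \<le> ?E (\<lambda>k. c * \<delta> * (y k)\<^sup>2 + B * indicator far_set k)"
    using pointwise by (intro order.trans[OF integral_abs_bound] integral_mono_AE AE_pmfI) simp_all
  also have "\<dots> = c * \<delta> * ((1 - p) / (n * p)) + B * measure_pmf.prob (binomial_pmf n p) far_set"
    using expectation_binomial_relative_deviation(2)[OF n]
    by (simp add: y_def Bochner_Integration.integral_add)
  also have "\<dots> \<le> c * \<delta> * ((1 - p) / (n * p)) + B * (2 * exp (-2 * real n * (p * \<delta>)\<^sup>2))"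
    using far_prob \<open>0 \<le> B\<close> by (intro add_left_mono mult_left_mono)
  finally show ?thesis .
qed

lemma n_times_expectation_tendsto_zero:
  fixes F :: "nat \<Rightarrow> nat \<Rightarrow> real" and c :: real
  assumes c: "0 \<le> c"
    and near: "\<forall>\<^sub>F n in sequentially. \<forall>k. \<bar>real k / (real n * p) - 1\<bar> < real n powr (-1/4) \<longrightarrow>
                 \<bar>F n k\<bar> \<le> c * \<bar>real k / (real n * p) - 1\<bar> ^ 3"
    and far: "\<forall>\<^sub>F n in sequentially. \<forall>k\<le>n. \<bar>F n k\<bar> \<le> (2 * real n / p) ^ 3"
  shows "(\<lambda>n. n * measure_pmf.expectation (binomial_pmf n p) (F n)) \<longlonglongrightarrow> 0"
proof (rule Lim_null_comparison)
  define R where "R n = c * real n powr (-1/4) * ((1 - p) / p) +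
    real n * (2 * real n / p) ^ 3 * (2 * exp (-2 * real n * (p * real n powr (-1/4))\<^sup>2))" for n
  show "R \<longlonglongrightarrow> 0"
    unfolding R_def using p_pos by real_asymp
  show "\<forall>\<^sub>F n in sequentially. norm (n * measure_pmf.expectation (binomial_pmf n p) (F n)) \<le> R n"
    using near far eventually_gt_at_top[of 0]
  proof eventually_elim
    case (elim n)
    then have "\<bar>measure_pmf.expectation (binomial_pmf n p) (F n)\<bar> \<le>
        c * real n powr (-1/4) * ((1 - p) / (n * p)) +
        (2 * real n / p) ^ 3 * (2 * exp (-2 * real n * (p * real n powr (-1/4))\<^sup>2))"
      by (intro abs_expectation_le_of_near_far_bounds c) auto
    then have "n * \<bar>measure_pmf.expectation (binomial_pmf n p) (F n)\<bar> \<le> n *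
        (c * real n powr (-1/4) * ((1 - p) / (n * p)) +
        (2 * real n / p) ^ 3 * (2 * exp (-2 * real n * (p * real n powr (-1/4))\<^sup>2)))"
      by (rule mult_left_mono) simp
    also have "\<dots> = R n"
      using elim(3) p_pos unfolding R_def by (simp add: field_simps)
    finally show ?case
      by (simp add: abs_mult)
  qed
qed

lemma ln_ratio_far_bounds:
  fixes k n :: nat
  assumes "k \<le> n" "0 < n"
  defines "a \<equiv> ln (real k / (real n * p))" and "y \<equiv> real k / (real n * p) - 1"
  shows "\<bar>a - y + y\<^sup>2 / 2\<bar> \<le> (2 * real n / p) ^ 3" "\<bar>a\<^sup>2 - y\<^sup>2\<bar> \<le> (2 * real n / p) ^ 3"
    and "\<bar>a\<bar> ^ 3 \<le> (2 * real n / p) ^ 3"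
proof -
  have "2 \<le> 2 * real n / p"
    using assms p_pos p_less_1 by (simp add: field_simps)
  then show "\<bar>a - y + y\<^sup>2 / 2\<bar> \<le> (2 * real n / p) ^ 3" "\<bar>a\<^sup>2 - y\<^sup>2\<bar> \<le> (2 * real n / p) ^ 3"
    and "\<bar>a\<bar> ^ 3 \<le> (2 * real n / p) ^ 3"
    using cubic_bounds_of_abs_le ln_ratio_crude_bounds[OF assms(1,2)] unfolding a_def y_def
    by blast+
qed

lemma n_times_expectation_tendsto_of_approx:
  fixes F G :: "nat \<Rightarrow> nat \<Rightarrow> real" and c :: real
  assumes approx: "(\<lambda>n. n * measure_pmf.expectation (binomial_pmf n p) (G n)) \<longlonglongrightarrow> L"
    and c: "0 \<le> c"
    and near: "\<forall>\<^sub>F n in sequentially. \<forall>k. \<bar>real k / (real n * p) - 1\<bar> < real n powr (-1/4) \<longrightarrow>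
                 \<bar>F n k - G n k\<bar> \<le> c * \<bar>real k / (real n * p) - 1\<bar> ^ 3"
    and far: "\<forall>\<^sub>F n in sequentially. \<forall>k\<le>n. \<bar>F n k - G n k\<bar> \<le> (2 * real n / p) ^ 3"
  shows "(\<lambda>n. n * measure_pmf.expectation (binomial_pmf n p) (F n)) \<longlonglongrightarrow> L"
proof -
  let ?E = "\<lambda>n. measure_pmf.expectation (binomial_pmf n p)"
  have "(\<lambda>n. n * ?E n (\<lambda>k. F n k - G n k) + n * ?E n (G n)) \<longlonglongrightarrow> 0 + L"
    by (intro tendsto_add approx n_times_expectation_tendsto_zero[OF c near far])
  moreover have "n * ?E n (\<lambda>k. F n k - G n k) + n * ?E n (G n) = n * ?E n (F n)" for n
    by (simp add: Bochner_Integration.integral_diff algebra_simps)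
  ultimately show ?thesis
    by simp
qed

lemma tendsto_n_times_expectation_ln_ratio:
  "(\<lambda>n. n * measure_pmf.expectation (binomial_pmf n p) (\<lambda>k. ln (real k / (real n * p))))
     \<longlonglongrightarrow> - (1 - p) / (2 * p)"
proof (rule n_times_expectation_tendsto_of_approx[where c = 1])
  let ?y = "\<lambda>n k. real k / (real n * p) - 1"
  show "(\<lambda>n. n * measure_pmf.expectation (binomial_pmf n p) (\<lambda>k. ?y n k - (?y n k)\<^sup>2 / 2))
      \<longlonglongrightarrow> - (1 - p) / (2 * p)"
  proof (rule tendsto_eventually, intro eventually_mono[OF eventually_gt_at_top[of 0]])
    fix n :: nat
    assume "0 < n"
    then show "n * measure_pmf.expectation (binomial_pmf n p) (\<lambda>k. ?y n k - (?y n k)\<^sup>2 / 2) =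
        - (1 - p) / (2 * p)"
      using expectation_binomial_relative_deviation[OF \<open>0 < n\<close>] p_pos
      by (simp add: Bochner_Integration.integral_diff field_simps)
  qed
  show "\<forall>\<^sub>F n in sequentially. \<forall>k. \<bar>?y n k\<bar> < real n powr (-1/4) \<longrightarrow>
      \<bar>ln (real k / (real n * p)) - (?y n k - (?y n k)\<^sup>2 / 2)\<bar> \<le> 1 * \<bar>?y n k\<bar> ^ 3"
  proof (intro eventually_mono[OF eventually_powr_quarter_le_half] allI impI)
    fix n k
    assume "real n powr (-1/4) \<le> 1/2" "\<bar>?y n k\<bar> < real n powr (-1/4)"
    then show "\<bar>ln (real k / (real n * p)) - (?y n k - (?y n k)\<^sup>2 / 2)\<bar> \<le> 1 * \<bar>?y n k\<bar> ^ 3"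
      using abs_ln_one_plus_x_minus_x_plus_half_square_le[of "?y n k"] by (simp add: algebra_simps)
  qed
  show "\<forall>\<^sub>F n in sequentially. \<forall>k\<le>n.
      \<bar>ln (real k / (real n * p)) - (?y n k - (?y n k)\<^sup>2 / 2)\<bar> \<le> (2 * real n / p) ^ 3"
    using eventually_gt_at_top[of 0]
    by eventually_elim (use ln_ratio_far_bounds(1) in \<open>simp add: algebra_simps\<close>)
qed simp

lemma tendsto_n_times_expectation_ln_ratio_square:
  "(\<lambda>n. n * measure_pmf.expectation (binomial_pmf n p) (\<lambda>k. (ln (real k / (real n * p)))\<^sup>2))
     \<longlonglongrightarrow> (1 - p) / p"
proof (rule n_times_expectation_tendsto_of_approx[where c = 6])
  let ?y = "\<lambda>n k. real k / (real n * p) - 1"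
  show "(\<lambda>n. n * measure_pmf.expectation (binomial_pmf n p) (\<lambda>k. (?y n k)\<^sup>2)) \<longlonglongrightarrow> (1 - p) / p"
  proof (rule tendsto_eventually, intro eventually_mono[OF eventually_gt_at_top[of 0]])
    fix n :: nat
    assume "0 < n"
    then show "n * measure_pmf.expectation (binomial_pmf n p) (\<lambda>k. (?y n k)\<^sup>2) = (1 - p) / p"
      using expectation_binomial_relative_deviation(2)[OF \<open>0 < n\<close>] p_pos by simp
  qed
  show "\<forall>\<^sub>F n in sequentially. \<forall>k. \<bar>?y n k\<bar> < real n powr (-1/4) \<longrightarrow>
      \<bar>(ln (real k / (real n * p)))\<^sup>2 - (?y n k)\<^sup>2\<bar> \<le> 6 * \<bar>?y n k\<bar> ^ 3"
  proof (intro eventually_mono[OF eventually_powr_quarter_le_half] allI impI)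
    fix n k
    assume "real n powr (-1/4) \<le> 1/2" "\<bar>?y n k\<bar> < real n powr (-1/4)"
    then show "\<bar>(ln (real k / (real n * p)))\<^sup>2 - (?y n k)\<^sup>2\<bar> \<le> 6 * \<bar>?y n k\<bar> ^ 3"
      using ln_one_plus_cubic_bounds(1)[of "?y n k"] by simp
  qed
  show "\<forall>\<^sub>F n in sequentially. \<forall>k\<le>n.
      \<bar>(ln (real k / (real n * p)))\<^sup>2 - (?y n k)\<^sup>2\<bar> \<le> (2 * real n / p) ^ 3"
    using eventually_gt_at_top[of 0] by eventually_elim (use ln_ratio_far_bounds(2) in simp)
qed simp

lemma tendsto_n_times_expectation_abs_ln_ratio_cube:
  "(\<lambda>n. n * measure_pmf.expectation (binomial_pmf n p) (\<lambda>k. \<bar>ln (real k / (real n * p))\<bar> ^ 3))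
     \<longlonglongrightarrow> 0"
proof (rule n_times_expectation_tendsto_of_approx[where c = 8 and G = "\<lambda>_ _. 0"])
  let ?y = "\<lambda>n k. real k / (real n * p) - 1"
  show "\<forall>\<^sub>F n in sequentially. \<forall>k. \<bar>?y n k\<bar> < real n powr (-1/4) \<longrightarrow>
      \<bar>\<bar>ln (real k / (real n * p))\<bar> ^ 3 - 0\<bar> \<le> 8 * \<bar>?y n k\<bar> ^ 3"
  proof (intro eventually_mono[OF eventually_powr_quarter_le_half] allI impI)
    fix n k
    assume "real n powr (-1/4) \<le> 1/2" "\<bar>?y n k\<bar> < real n powr (-1/4)"
    then show "\<bar>\<bar>ln (real k / (real n * p))\<bar> ^ 3 - 0\<bar> \<le> 8 * \<bar>?y n k\<bar> ^ 3"
      using ln_one_plus_cubic_bounds(2)[of "?y n k"] by simp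
  qed
  show "\<forall>\<^sub>F n in sequentially. \<forall>k\<le>n. \<bar>\<bar>ln (real k / (real n * p))\<bar> ^ 3 - 0\<bar> \<le> (2 * real n / p) ^ 3"
    using eventually_gt_at_top[of 0] by eventually_elim (use ln_ratio_far_bounds(3) in simp)
qed simp_all

lemma tendsto_power_expectation_iexp_ln_ratio:
  "(\<lambda>n. measure_pmf.expectation (binomial_pmf n p) (\<lambda>k. iexp (t * ln (real k / (real n * p)))) ^ n)
     \<longlonglongrightarrow> exp (\<i> * complex_of_real (t * (- (1 - p) / (2 * p))) -
                complex_of_real ((sqrt ((1 - p) / p) * t)\<^sup>2 / 2))"
proof (rule tendsto_power_of_n_times_diff_one)
  let ?E = "\<lambda>n. measure_pmf.expectation (binomial_pmf n p)"
  let ?g = "\<lambda>n k. ln (real k / (real n * p))"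
  define z where "z n = ?E n (\<lambda>k. iexp (t * ?g n k))" for n
  define q where "q n = 1 + \<i> * complex_of_real (t * ?E n (?g n)) -
      complex_of_real (t\<^sup>2 * ?E n (\<lambda>k. (?g n k)\<^sup>2) / 2)" for n
  show "norm (z n) \<le> 1" for n
    unfolding z_def using integral_norm_bound[of "binomial_pmf n p" "\<lambda>k. iexp (t * ?g n k)"]
    by (simp add: norm_exp_i_times measure_pmf.prob_space)
  have "(\<lambda>n. norm (of_nat n * (z n - q n))) \<longlonglongrightarrow> 0"
  proof (rule Lim_null_comparison)
    show "\<forall>\<^sub>F n in sequentially. norm (norm (of_nat n * (z n - q n))) \<le>
        \<bar>t\<bar> ^ 3 / 6 * (n * ?E n (\<lambda>k. \<bar>?g n k\<bar> ^ 3))"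
    proof (intro always_eventually allI)
      fix n
      have "norm (z n - q n) \<le> \<bar>t\<bar> ^ 3 / 6 * ?E n (\<lambda>k. \<bar>?g n k\<bar> ^ 3)"
        unfolding z_def q_def by (rule expectation_iexp_second_order_approx) (simp add: finite_set_pmf_binomial_pmf)
      then have "n * norm (z n - q n) \<le> n * (\<bar>t\<bar> ^ 3 / 6 * ?E n (\<lambda>k. \<bar>?g n k\<bar> ^ 3))"
        by (rule mult_left_mono) simp
      then show "norm (norm (of_nat n * (z n - q n))) \<le> \<bar>t\<bar> ^ 3 / 6 * (n * ?E n (\<lambda>k. \<bar>?g n k\<bar> ^ 3))"
        by (simp add: norm_mult mult.left_commute)
    qed
    show "(\<lambda>n. \<bar>t\<bar> ^ 3 / 6 * (n * ?E n (\<lambda>k. \<bar>?g n k\<bar> ^ 3))) \<longlonglongrightarrow> 0"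
      using tendsto_mult_right_zero[OF tendsto_n_times_expectation_abs_ln_ratio_cube] by simp
  qed
  then have "(\<lambda>n. of_nat n * (z n - q n) +
        (\<i> * complex_of_real (t * (n * ?E n (?g n))) -
         complex_of_real (t\<^sup>2 * (n * ?E n (\<lambda>k. (?g n k)\<^sup>2)) / 2)))
      \<longlonglongrightarrow> 0 + (\<i> * complex_of_real (t * (- (1 - p) / (2 * p))) -
                 complex_of_real (t\<^sup>2 * ((1 - p) / p) / 2))"
    by (intro tendsto_intros tendsto_n_times_expectation_ln_ratio
        tendsto_n_times_expectation_ln_ratio_square) (simp_all add: tendsto_norm_zero_iff)
  moreover have "of_nat n * (z n - q n) +
        (\<i> * complex_of_real (t * (n * ?E n (?g n))) -
         complex_of_real (t\<^sup>2 * (n * ?E n (\<lambda>k. (?g n k)\<^sup>2)) / 2)) = of_nat n * (z n - 1)" for n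
    unfolding q_def by (simp add: algebra_simps)
  moreover have "(sqrt ((1 - p) / p) * t)\<^sup>2 = t\<^sup>2 * ((1 - p) / p)"
    using p_pos p_less_1 by (simp add: power_mult_distrib)
  ultimately show "(\<lambda>n. of_nat n * (z n - 1)) \<longlonglongrightarrow>
      \<i> * complex_of_real (t * (- (1 - p) / (2 * p))) - complex_of_real ((sqrt ((1 - p) / p) * t)\<^sup>2 / 2)"
    by simp
qed

lemma weak_conv_m_log_H_hat:
  "weak_conv_m (\<lambda>n. distr (bernoulli_array n p) borel (log_H_hat n p))
     (density lborel (normal_density (- (1 - p) / (2 * p)) (sqrt ((1 - p) / p))))"
proof (rule levy_continuity)
  show "(\<lambda>n. char (distr (bernoulli_array n p) borel (log_H_hat n p)) t) \<longlonglongrightarrow>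
      char (density lborel (normal_density (- (1 - p) / (2 * p)) (sqrt ((1 - p) / p)))) t" for t
    using tendsto_power_expectation_iexp_ln_ratio[of t] p_pos p_less_1
    by (simp add: char_distr_log_H_hat char_normal_density)
qed (fact real_distribution_distr_measure_pmf,
     rule real_distribution_normal_density, use p_pos p_less_1 in simp)

lemma weak_conv_m_exp_log_H_hat:
  "weak_conv_m (\<lambda>n. measure_pmf (map_pmf (\<lambda>\<xi>. exp (log_H_hat n p \<xi>)) (bernoulli_array n p)))
     (distr (density lborel (normal_density (- (1 - p) / (2 * p)) (sqrt ((1 - p) / p)))) borel exp)"
proof -
  have "weak_conv_m (\<lambda>n. distr (distr (bernoulli_array n p) borel (log_H_hat n p)) borel exp)
      (distr (density lborel (normal_density (- (1 - p) / (2 * p)) (sqrt ((1 - p) / p)))) borel exp)"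
    using p_pos p_less_1
    by (intro weak_conv_m_distr_continuous real_distribution_distr_measure_pmf
        real_distribution_normal_density weak_conv_m_log_H_hat) simp_all
  then show ?thesis
    by (simp add: weak_conv_m_map_pmf_iff_distr distr_distr comp_def)
qed

end

theorem mainTheorem7:
  fixes p :: real
  assumes "0 < p" and "p < 1"
  shows "weak_conv_m (H_hat_law p)
           (distr (density lborel (normal_density (- (1 - p) / (2 * p)) (sqrt ((1 - p) / p))))
                  borel exp)"
proof -
  have "(\<lambda>n. measure_pmf.prob (bernoulli_array n p)
      {\<xi>. exp (log_H_hat n p \<xi>) \<noteq> H_hat n p \<xi>}) \<longlonglongrightarrow> 0"
  proof (rule Lim_null_comparison)
    show "\<forall>\<^sub>F n in sequentially. norm (measure_pmf.prob (bernoulli_array n p)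
        {\<xi>. exp (log_H_hat n p \<xi>) \<noteq> H_hat n p \<xi>}) \<le> n * (1 - p) ^ n"
      using assms by (intro always_eventually allI) (simp add: prob_exp_log_H_hat_neq_le)
    show "(\<lambda>n. n * (1 - p) ^ n) \<longlonglongrightarrow> 0"
      using assms by real_asymp
  qed
  with weak_conv_m_exp_log_H_hat[OF assms] show ?thesis
    unfolding H_hat_law_def by (rule weak_conv_m_map_pmf_of_prob_neq_tendsto_zero)
qed

end
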